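(* For every integer $m\ge 5$, the independence polynomial $I(T_{m,2};t)$ is unimodal and its mode belongs to $\{\rho_m,\rho_m+1\}$, where $\rho_m$ denotes the mode of the independence polynomial $I(C_m;t)$ of the cycle $C_m$.
   Context: For a simple graph $G$, the independence polynomial is $I(G;t)=\sum_{k\ge 0}s_k(G)t^k$, where $s_k(G)$ is the number of independent sets (sets of pairwise non-adjacent vertices) of size $k$ in $G$. $C_m$ is the cycle on $m$ vertices; its independence polynomial is known to be unimodal. For integers $m\ge 3$, $n\ge 1$, the tadpole graph $T_{m,n}$ is the simple graph with vertex set $\{x_1,\dots,x_m,y_1,\dots,y_n\}$ and edges $\{x_i,x_{i+1}\}$ for $1\le i\le m-1$, $\{x_m,x_1\}$, $\{y_j,y_{j+1}\}$ for $1\le j\le n-1$, and $\{x_m,y_1\}$. A polynomial $\sum a_kt^k$ with nonnegative coefficients is unimodal if $a_0\le\cdots\le a_m\ge a_{m+1}\ge\cdots$ for some $m$; with $a_{-1}=0$, its mode is the unique $i$ with $a_{i-1}<a_i\ge a_{i+1}\ge a_{i+2}\ge\cdots$. *)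

theory Defs
  imports Main
begin

text \<open>A simple graph is given by a vertex set V and a set E of 2-element subsets of V.\<close>

definition indep_set :: "'a set \<Rightarrow> 'a set set \<Rightarrow> 'a set \<Rightarrow> bool" where
  "indep_set V E S \<longleftrightarrow> S \<subseteq> V \<and> (\<forall>e\<in>E. \<not> e \<subseteq> S)"

text \<open>s_k(G): number of independent sets of size k; the coefficient sequence of I(G;t).\<close>
definition indep_coeff :: "'a set \<Rightarrow> 'a set set \<Rightarrow> nat \<Rightarrow> nat" where
  "indep_coeff V E k = card {S. indep_set V E S \<and> card S = k}"

definition cycle_V :: "nat \<Rightarrow> nat set" where
  "cycle_V m = {1..m}"

definition cycle_E :: "nat \<Rightarrow> nat set set" where
  "cycle_E m = {{i, i + 1} | i. 1 \<le> i \<and> i \<le> m - 1} \<union> {{m, 1}}"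

text \<open>Tadpole T_{m,n}: x_i = Inl i (1 \<le> i \<le> m), y_j = Inr j (1 \<le> j \<le> n).\<close>
definition tadpole_V :: "nat \<Rightarrow> nat \<Rightarrow> (nat + nat) set" where
  "tadpole_V m n = Inl ` {1..m} \<union> Inr ` {1..n}"

definition tadpole_E :: "nat \<Rightarrow> nat \<Rightarrow> (nat + nat) set set" where
  "tadpole_E m n =
     {{Inl i, Inl (i + 1)} | i. 1 \<le> i \<and> i \<le> m - 1}
   \<union> {{Inl m, Inl 1}}
   \<union> {{Inr j, Inr (j + 1)} | j. 1 \<le> j \<and> j \<le> n - 1}
   \<union> {{Inl m, Inr 1}}"

definition unimodal :: "(nat \<Rightarrow> nat) \<Rightarrow> bool" where
  "unimodal a \<longleftrightarrow> (\<exists>m. (\<forall>i<m. a i \<le> a (Suc i)) \<and> (\<forall>i\<ge>m. a (Suc i) \<le> a i))"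

definition is_mode :: "(nat \<Rightarrow> nat) \<Rightarrow> nat \<Rightarrow> bool" where
  "is_mode a i \<longleftrightarrow> (if i = 0 then 0 < a 0 else a (i - 1) < a i) \<and> (\<forall>j\<ge>i. a (Suc j) \<le> a j)"

definition mode :: "(nat \<Rightarrow> nat) \<Rightarrow> nat" where
  "mode a = (THE i. is_mode a i)"

end

theory Submission
  imports Defs
begin

(* Deleting a vertex v gives s_(k+1)(G) = s_(k+1)(G - v) + s_k(G - N[v]).  Applied at the
   tail vertices of T_(m,2) and at a vertex of C_m, with paths counted by binomials, it yields
   t_(k+1) = c_(k+1) + c_k + p_k, where c is the coefficient sequence of C_m and
   p_k = (m - k choose k) that of the path on m - 1 vertices.  Both sequences satisfy ratio
   identities  c_(k+1) (k+1) (m-k-1) = c_k (m-2k) (m-2k-1)  and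
   p_(k+1) (k+1) (m-k) = p_k (m-2k) (m-2k-1),  whose ratios decrease in k.  Hence c rises
   strictly up to its mode r and falls afterwards, p rises whenever c rises one step later and
   falls whenever c falls.  So t rises strictly up to r and falls from r + 1 on, and its mode
   is r or r + 1. *)

definition closed_neighbourhood :: "'a set set \<Rightarrow> 'a \<Rightarrow> 'a set" where
  "closed_neighbourhood E v = insert v {u. {u, v} \<in> E}"

lemma indep_set_finite: "finite V \<Longrightarrow> indep_set V E S \<Longrightarrow> finite S"
  unfolding indep_set_def using finite_subset by blast

lemma indep_coeff_0:
  assumes "finite V" and "\<forall>e\<in>E. card e = 2"
  shows "indep_coeff V E 0 = 1"
proof -
  have "{S. indep_set V E S \<and> card S = 0} = {{}}"
    using assms indep_set_finite by (fastforce simp: indep_set_def)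
  then show ?thesis by (simp add: indep_coeff_def)
qed

lemma indep_coeff_empty_Suc: "indep_coeff {} E (Suc k) = 0"
  by (simp add: indep_coeff_def indep_set_def)

lemma indep_set_insert_iff:
  assumes "v \<notin> S" and "\<forall>e\<in>E. card e = 2"
  shows "indep_set V E (insert v S) \<longleftrightarrow> v \<in> V \<and> indep_set (V - closed_neighbourhood E v) E S"
proof
  assume indep: "indep_set V E (insert v S)"
  have "u \<notin> S" if "{u, v} \<in> E" for u
    using indep that unfolding indep_set_def by (metis empty_subsetI insert_subset insert_mono)
  with indep assms(1) show "v \<in> V \<and> indep_set (V - closed_neighbourhood E v) E S"
    unfolding indep_set_def closed_neighbourhood_def by auto
next
  assume "v \<in> V \<and> indep_set (V - closed_neighbourhood E v) E S"
  then have v: "v \<in> V" and sub: "S \<subseteq> V - closed_neighbourhood E v"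
    and indep: "\<forall>e\<in>E. \<not> e \<subseteq> S" unfolding indep_set_def by auto
  have "\<not> e \<subseteq> insert v S" if e: "e \<in> E" for e
  proof
    assume e_sub: "e \<subseteq> insert v S"
    show False
    proof (cases "v \<in> e")
      case True
      obtain u where "e = {u, v}"
        using assms(2) e True by (metis card_2_iff insert_commute insert_iff singletonD)
      moreover have "u \<noteq> v" using calculation assms(2) e by fastforce
      ultimately show False using e e_sub sub unfolding closed_neighbourhood_def by auto
    next
      case False
      then show False using indep e e_sub by blast
    qed
  qed
  then show "indep_set V E (insert v S)" using v sub unfolding indep_set_def by auto
qed

lemma finite_indep_sets: "finite V \<Longrightarrow> finite {S. indep_set V E S \<and> P S}"
  by (rule finite_subset[of _ "Pow V"]) (auto simp: indep_set_def)

lemma indep_sets_Suc_split: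
  assumes "finite V" and "v \<in> V" and edges: "\<forall>e\<in>E. card e = 2"
  shows "{S. indep_set V E S \<and> card S = Suc k}
       = {S. indep_set (V - {v}) E S \<and> card S = Suc k}
         \<union> insert v ` {S. indep_set (V - closed_neighbourhood E v) E S \<and> card S = k}"
    (is "?L = ?A \<union> insert v ` ?B")
proof (intro equalityI subsetI)
  fix S assume S: "S \<in> ?L"
  show "S \<in> ?A \<union> insert v ` ?B"
  proof (cases "v \<in> S")
    case True
    have "finite S" using S \<open>finite V\<close> indep_set_finite by blast
    then have "card (S - {v}) = k" using S True by simp
    moreover have "indep_set (V - closed_neighbourhood E v) E (S - {v})"
      using S True indep_set_insert_iff[OF _ edges, of v "S - {v}" V] by (simp add: insert_absorb)
    ultimately have "S - {v} \<in> ?B" by blast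
    moreover have "S = insert v (S - {v})" using True by blast
    ultimately show ?thesis by blast
  next
    case False
    then show ?thesis using S unfolding indep_set_def by blast
  qed
next
  fix S assume "S \<in> ?A \<union> insert v ` ?B"
  then show "S \<in> ?L"
  proof
    assume "S \<in> ?A"
    then show ?thesis unfolding indep_set_def by blast
  next
    assume "S \<in> insert v ` ?B"
    then obtain T where T: "T \<in> ?B" "S = insert v T" by blast
    then have "v \<notin> T" "finite T"
      using \<open>finite V\<close> indep_set_finite[of "V - closed_neighbourhood E v"]
      unfolding indep_set_def closed_neighbourhood_def by blast+
    then show ?thesis using T indep_set_insert_iff[OF _ edges] \<open>v \<in> V\<close> by simp
  qed
qed

lemma indep_coeff_Suc_delete_vertex:
  assumes "finite V" and "v \<in> V" and "\<forall>e\<in>E. card e = 2"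
  shows "indep_coeff V E (Suc k)
       = indep_coeff (V - {v}) E (Suc k) + indep_coeff (V - closed_neighbourhood E v) E k"
proof -
  let ?A = "{S. indep_set (V - {v}) E S \<and> card S = Suc k}"
    and ?B = "{S. indep_set (V - closed_neighbourhood E v) E S \<and> card S = k}"
  have "?A \<inter> insert v ` ?B = {}" unfolding indep_set_def by blast
  moreover have "v \<notin> T" if "T \<in> ?B" for T
    using that unfolding indep_set_def closed_neighbourhood_def by blast
  then have "card (insert v ` ?B) = card ?B"
    by (intro card_image inj_onI) (metis Diff_insert_absorb)
  moreover have "finite ?A" "finite ?B" using \<open>finite V\<close> by (auto intro: finite_indep_sets)
  ultimately show ?thesis
    unfolding indep_coeff_def indep_sets_Suc_split[OF assms] by (simp add: card_Un_disjoint)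
qed

lemma indep_set_restrict_edges: "indep_set V E S \<longleftrightarrow> indep_set V {e \<in> E. e \<subseteq> V} S"
  unfolding indep_set_def by (auto dest: subset_trans)

lemma indep_coeff_cong_edges:
  assumes "{e \<in> E. e \<subseteq> V} = {e \<in> E'. e \<subseteq> V}"
  shows "indep_coeff V E k = indep_coeff V E' k"
  unfolding indep_coeff_def by (subst (1 2) indep_set_restrict_edges) (simp only: assms)

lemma indep_set_image_iff:
  assumes "inj f" and edges: "{e \<in> E'. e \<subseteq> f ` V} = image f ` {e \<in> E. e \<subseteq> V}"
    and "S \<subseteq> V"
  shows "indep_set (f ` V) E' (f ` S) \<longleftrightarrow> indep_set V E S"
proof -
  have "f ` S \<subseteq> f ` V" using \<open>S \<subseteq> V\<close> by (rule image_mono)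
  moreover have "f ` e \<subseteq> f ` S \<longleftrightarrow> e \<subseteq> S" for e
    using \<open>inj f\<close> by (rule inj_image_subset_iff)
  ultimately show ?thesis
    using \<open>S \<subseteq> V\<close> by (subst (1 2) indep_set_restrict_edges) (auto simp: edges indep_set_def)
qed

lemma indep_coeff_image:
  assumes "inj f" and edges: "{e \<in> E'. e \<subseteq> f ` V} = image f ` {e \<in> E. e \<subseteq> V}"
  shows "indep_coeff (f ` V) E' k = indep_coeff V E k"
proof -
  have card_f: "card (f ` S) = card S" for S
    using \<open>inj f\<close> by (simp add: card_image inj_on_subset)
  have "{S'. indep_set (f ` V) E' S' \<and> card S' = k} = image f ` {S. indep_set V E S \<and> card S = k}"
  proof (intro equalityI subsetI)
    fix S' assume S': "S' \<in> {S'. indep_set (f ` V) E' S' \<and> card S' = k}"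
    define S where "S = V \<inter> f -` S'"
    have "S' = f ` S" "S \<subseteq> V" using S' unfolding S_def indep_set_def by blast+
    then show "S' \<in> image f ` {S. indep_set V E S \<and> card S = k}"
      using S' indep_set_image_iff[OF assms] card_f by auto
  next
    fix S' assume "S' \<in> image f ` {S. indep_set V E S \<and> card S = k}"
    then obtain S where "S' = f ` S" "indep_set V E S" "card S = k" by blast
    moreover have "S \<subseteq> V" using calculation(2) unfolding indep_set_def by blast
    ultimately show "S' \<in> {S'. indep_set (f ` V) E' S' \<and> card S' = k}"
      using indep_set_image_iff[OF assms] card_f by simp
  qed
  moreover have "inj (image f)" using \<open>inj f\<close> by (simp add: inj_on_def inj_image_eq_iff)
  ultimately show ?thesis unfolding indep_coeff_def by (simp add: card_image inj_on_subset)
qed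

(* Only edges inside the vertex set matter to indep_set, so this path on all of nat serves as
   the path on every interval. *)
definition path_edges :: "nat set set" where
  "path_edges = range (\<lambda>i. {i, Suc i})"

lemma card_path_edges: "\<forall>e\<in>path_edges. card e = 2"
  by (auto simp: path_edges_def)

lemma closed_neighbourhood_path_edges_Suc:
  "closed_neighbourhood path_edges (Suc i) = {i, Suc i, Suc (Suc i)}"
  by (auto simp: closed_neighbourhood_def path_edges_def doubleton_eq_iff)

lemma binomial_diff_Suc_Suc:
  "(n + 2 - Suc k) choose Suc k = ((n + 1 - Suc k) choose Suc k) + ((n - k) choose k)"
proof (cases "k \<le> n")
  case True
  then have "n + 2 - Suc k = Suc (n - k)" "n + 1 - Suc k = n - k" by simp_all
  then show ?thesis by simp
qed (simp add: binomial_eq_0)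

lemma Suc_times_binomial_Suc: "Suc k * (n choose Suc k) = (n - k) * (n choose k)"
  by (simp only: binomial_absorption binomial_absorb_comp)

lemma binomial_diff_Suc_mult_eq:
  "(n - Suc k choose Suc k) * (Suc k * (n - k)) = (n - k choose k) * ((n - 2 * k) * (n - Suc (2 * k)))"
proof (cases "2 * k + 1 \<le> n")
  case True
  then obtain a where "n = 2 * k + 1 + a" using le_Suc_ex by blast
  then have n: "n - Suc k = a + k" "n - k = Suc (a + k)" "n - 2 * k = Suc a" "n - Suc (2 * k) = a"
    by simp_all
  have "(n - Suc k choose Suc k) * (Suc k * (n - k)) = a * (a + k choose k) * Suc (a + k)"
  proof -
    have "Suc k * (a + k choose Suc k) = a * (a + k choose k)"
      using Suc_times_binomial_Suc[of k "a + k"] by simp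
    then show ?thesis by (simp only: n mult.assoc[symmetric]) (simp only: mult_ac)
  qed
  also have "\<dots> = a * (Suc a * (Suc (a + k) choose k))"
  proof -
    have "Suc a * (Suc (a + k) choose k) = Suc (a + k) * (a + k choose k)"
      using binomial_absorb_comp[of "Suc (a + k)" k] by (simp add: Suc_diff_le)
    then show ?thesis by (simp only: mult_ac)
  qed
  also have "\<dots> = (n - k choose k) * ((n - 2 * k) * (n - Suc (2 * k)))"
    by (simp only: n) (simp only: mult_ac)
  finally show ?thesis .
next
  case False
  then have "n - Suc k choose Suc k = 0" by simp
  then show ?thesis using False by simp
qed

lemma indep_coeff_path: "indep_coeff {a..<a + n} path_edges k = (n + 1 - k) choose k"
proof (induction n arbitrary: k rule: induct_nat_012)
  case 0
  then show ?case
    by (cases k) (simp_all add: indep_coeff_0 card_path_edges indep_coeff_empty_Suc)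
next
  case 1
  have "indep_coeff {a} path_edges (Suc j) = indep_coeff {} path_edges j" for j
    using indep_coeff_Suc_delete_vertex[of "{a}" a path_edges j] card_path_edges
    by (simp add: indep_coeff_empty_Suc closed_neighbourhood_def)
  then show ?case
    by (cases k; cases "k - 1") (simp_all add: indep_coeff_0 card_path_edges indep_coeff_empty_Suc)
next
  case (ge2 n)
  show ?case
  proof (cases k)
    case 0
    then show ?thesis by (simp add: indep_coeff_0 card_path_edges)
  next
    case (Suc j)
    let ?V = "{a..<a + Suc (Suc n)}"
    have "?V - {a + Suc n} = {a..<a + Suc n}" by auto
    moreover have "?V - closed_neighbourhood path_edges (a + Suc n) = {a..<a + n}"
      by (auto simp: closed_neighbourhood_path_edges_Suc)
    ultimately have "indep_coeff ?V path_edges (Suc j)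
        = indep_coeff {a..<a + Suc n} path_edges (Suc j) + indep_coeff {a..<a + n} path_edges j"
      using indep_coeff_Suc_delete_vertex[of ?V "a + Suc n" path_edges j] card_path_edges by simp
    then show ?thesis
      using ge2.IH binomial_diff_Suc_Suc[of "Suc n" j] Suc by simp
  qed
qed

abbreviation cycle_coeff :: "nat \<Rightarrow> nat \<Rightarrow> nat" where
  "cycle_coeff m \<equiv> indep_coeff (cycle_V m) (cycle_E m)"

lemma card_cycle_edges: "2 \<le> m \<Longrightarrow> \<forall>e\<in>cycle_E m. card e = 2"
  by (auto simp: cycle_E_def)

lemma cycle_edges_within_interval:
  assumes "1 \<le> a" and "b \<le> m"
  shows "{e \<in> cycle_E m. e \<subseteq> {a..<b}} = {e \<in> path_edges. e \<subseteq> {a..<b}}"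
proof -
  have "{m, 1} \<notin> {e. e \<subseteq> {a..<b}}" using assms by simp
  moreover have "{{i, i + 1} | i. 1 \<le> i \<and> i \<le> m - 1} \<inter> {e. e \<subseteq> {a..<b}}
      = path_edges \<inter> {e. e \<subseteq> {a..<b}}"
    using assms by (fastforce simp: path_edges_def)
  ultimately show ?thesis unfolding cycle_E_def by blast
qed

lemma indep_coeff_cycle_interval:
  assumes "1 \<le> a" and "a + n \<le> m"
  shows "indep_coeff {a..<a + n} (cycle_E m) k = (n + 1 - k) choose k"
  using assms indep_coeff_cong_edges[OF cycle_edges_within_interval] indep_coeff_path by simp

lemma cycle_coeff_0: "2 \<le> m \<Longrightarrow> cycle_coeff m 0 = 1"
  by (simp add: indep_coeff_0 card_cycle_edges cycle_V_def)

lemma closed_neighbourhood_cycle: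
  assumes "3 \<le> m"
  shows "closed_neighbourhood (cycle_E m) m = {m - 1, m, 1}"
proof -
  have "{u, m} \<in> cycle_E m \<longleftrightarrow> u = m - 1 \<or> u = 1" for u
    using assms unfolding cycle_E_def by (auto simp: doubleton_eq_iff)
  then show ?thesis unfolding closed_neighbourhood_def by blast
qed

lemma cycle_coeff_Suc:
  assumes "3 \<le> m"
  shows "cycle_coeff m (Suc k) = ((m - Suc k) choose Suc k) + ((m - 2 - k) choose k)"
proof -
  have "indep_coeff (cycle_V m - {m}) (cycle_E m) (Suc k) = (m - Suc k) choose Suc k"
  proof -
    have "cycle_V m - {m} = {1..<1 + (m - 1)}" using assms by (auto simp: cycle_V_def)
    then show ?thesis using assms indep_coeff_cycle_interval[of 1 "m - 1" m "Suc k"] by simp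
  qed
  moreover have "indep_coeff (cycle_V m - closed_neighbourhood (cycle_E m) m) (cycle_E m) k
      = (m - 2 - k) choose k"
  proof -
    have "cycle_V m - closed_neighbourhood (cycle_E m) m = {2..<2 + (m - 3)}"
      using assms by (auto simp: cycle_V_def closed_neighbourhood_cycle)
    then show ?thesis using assms indep_coeff_cycle_interval[of 2 "m - 3" m k] by simp
  qed
  ultimately show ?thesis
    using assms indep_coeff_Suc_delete_vertex[of "cycle_V m" m "cycle_E m" k] card_cycle_edges[of m]
    by (simp add: cycle_V_def)
qed

lemma image_Inl_pairs: "image Inl ` {{i, i + 1} | i. P i} = {{Inl i, Inl (i + 1)} | i. P i}"
  by (simp add: setcompr_eq_image image_image)

lemma image_Inl_cycle_E:
  "image Inl ` cycle_E m = {{Inl i, Inl (i + 1)} | i. 1 \<le> i \<and> i \<le> m - 1} \<union> {{Inl m, Inl 1}}"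
  unfolding cycle_E_def image_Un image_Inl_pairs by simp

lemma tadpole_E_split:
  "tadpole_E m n = image Inl ` cycle_E m
     \<union> ({{Inr j, Inr (j + 1)} | j. 1 \<le> j \<and> j \<le> n - 1} \<union> {{Inl m, Inr 1}})"
  unfolding tadpole_E_def image_Inl_cycle_E by (simp add: Un_ac insert_commute)

lemma card_tadpole_edges: "2 \<le> m \<Longrightarrow> \<forall>e\<in>tadpole_E m n. card e = 2"
  by (auto simp: tadpole_E_def)

lemma tadpole_edges_within_cycle:
  "{e \<in> tadpole_E m n. e \<subseteq> Inl ` V} = image Inl ` {e \<in> cycle_E m. e \<subseteq> V}"
proof -
  have "{e \<in> tadpole_E m n. e \<subseteq> Inl ` V} = {e \<in> image Inl ` cycle_E m. e \<subseteq> Inl ` V}"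
    unfolding tadpole_E_split by blast
  also have "\<dots> = image Inl ` {e \<in> cycle_E m. e \<subseteq> V}"
    by (auto simp: inj_image_subset_iff)
  finally show ?thesis .
qed

lemma indep_coeff_tadpole_Inl:
  "indep_coeff (Inl ` V) (tadpole_E m n) k = indep_coeff V (cycle_E m) k"
  by (rule indep_coeff_image[OF inj_Inl tadpole_edges_within_cycle])

lemma closed_neighbourhood_tadpole_tail:
  "closed_neighbourhood (tadpole_E m 2) (Inr 1) = {Inr 1, Inr 2, Inl m}"
  "closed_neighbourhood (tadpole_E m 2) (Inr 2) = {Inr 2, Inr 1}"
proof -
  have "{u, Inr 1} \<in> tadpole_E m 2 \<longleftrightarrow> u = Inr 2 \<or> u = Inl m"
    and "{u, Inr 2} \<in> tadpole_E m 2 \<longleftrightarrow> u = Inr 1" for u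
    unfolding tadpole_E_def by (auto simp: doubleton_eq_iff)
  then show "closed_neighbourhood (tadpole_E m 2) (Inr 1) = {Inr 1, Inr 2, Inl m}"
    and "closed_neighbourhood (tadpole_E m 2) (Inr 2) = {Inr 2, Inr 1}"
    unfolding closed_neighbourhood_def by blast+
qed

lemma indep_coeff_tadpole_Suc:
  assumes "3 \<le> m"
  shows "indep_coeff (tadpole_V m 2) (tadpole_E m 2) (Suc k)
       = cycle_coeff m (Suc k) + cycle_coeff m k + ((m - k) choose k)"
proof -
  let ?T = "tadpole_V m 2" and ?E = "tadpole_E m 2"
  have edges: "\<forall>e\<in>?E. card e = 2" using assms by (intro card_tadpole_edges) simp
  have "?T - {Inr 1} = insert (Inr 2) (Inl ` cycle_V m)"
    and "Inl ` cycle_V m - {Inr (2::nat)} = Inl ` cycle_V m"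
    and "Inl ` cycle_V m - {Inr (2::nat), Inr 1} = Inl ` cycle_V m"
    by (auto simp: tadpole_V_def cycle_V_def)
  then have without_Inr_1: "indep_coeff (?T - {Inr 1}) ?E (Suc k)
      = cycle_coeff m (Suc k) + cycle_coeff m k"
    using indep_coeff_Suc_delete_vertex[of "?T - {Inr 1}" "Inr 2" ?E k] edges
    by (simp add: closed_neighbourhood_tadpole_tail indep_coeff_tadpole_Inl cycle_V_def)
  have "?T - closed_neighbourhood ?E (Inr 1) = Inl ` {1..<1 + (m - 1)}"
    using assms unfolding closed_neighbourhood_tadpole_tail by (auto simp: tadpole_V_def)
  then have without_N_Inr_1: "indep_coeff (?T - closed_neighbourhood ?E (Inr 1)) ?E k
      = (m - k) choose k"
    using assms indep_coeff_cycle_interval[of 1 "m - 1" m k] by (simp only: indep_coeff_tadpole_Inl) simp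
  show ?thesis
    using indep_coeff_Suc_delete_vertex[of ?T "Inr 1" ?E k] edges without_Inr_1 without_N_Inr_1
    by (simp add: tadpole_V_def)
qed

lemma cycle_coeff_mult_eq:
  assumes "3 \<le> m"
  shows "cycle_coeff m k * (m - k) = m * (m - k choose k)"
proof (cases k)
  case 0
  then show ?thesis using assms by (simp add: cycle_coeff_0)
next
  case (Suc j)
  show ?thesis
  proof (cases "j + 2 \<le> m")
    case True
    then obtain a where "m = j + 2 + a" using le_Suc_ex by blast
    then have m: "m - Suc j = Suc a" "m - 2 - j = a" "m = Suc a + Suc j" by simp_all
    have "cycle_coeff m k * (m - k) = (Suc a choose Suc j) * Suc a + Suc a * (a choose j)"
      using assms by (simp only: Suc cycle_coeff_Suc m(1,2) add_mult_distrib) (simp only: mult.commute)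
    also have "\<dots> = (Suc a choose Suc j) * (Suc a + Suc j)"
      by (simp only: Suc_times_binomial_eq add_mult_distrib2)
    also have "\<dots> = m * (m - k choose k)"
      using Suc m(1,3) by (metis mult.commute)
    finally show ?thesis .
  next
    case False
    then have "m - k = 0" using Suc by simp
    then show ?thesis using Suc by simp
  qed
qed

lemma le_if_mult_eq_mult:
  fixes a b n d :: nat
  assumes "b * d = a * n" and "n \<le> d" and "0 < d"
  shows "b \<le> a"
proof -
  have "b * d \<le> a * d" using assms(1,2) by simp
  then show ?thesis using \<open>0 < d\<close> by simp
qed

lemma cycle_coeff_Suc_mult_eq:
  assumes "3 \<le> m"
  shows "cycle_coeff m (Suc k) * (Suc k * (m - Suc k))
       = cycle_coeff m k * ((m - 2 * k) * (m - Suc (2 * k)))"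
proof (cases "k < m")
  case True
  have "cycle_coeff m (Suc k) * (Suc k * (m - Suc k)) * (m - k)
      = m * (m - Suc k choose Suc k) * (Suc k * (m - k))"
    using cycle_coeff_mult_eq[OF assms, of "Suc k"] by (simp only: mult_ac)
  also have "\<dots> = m * (m - k choose k) * ((m - 2 * k) * (m - Suc (2 * k)))"
    by (simp only: mult.assoc binomial_diff_Suc_mult_eq)
  also have "\<dots> = (cycle_coeff m k * (m - k)) * ((m - 2 * k) * (m - Suc (2 * k)))"
    by (simp only: cycle_coeff_mult_eq[OF assms])
  also have "\<dots> = cycle_coeff m k * ((m - 2 * k) * (m - Suc (2 * k))) * (m - k)"
    by (simp only: mult_ac)
  finally show ?thesis using True by simp
next
  case False
  then show ?thesis by simp
qed

lemma cycle_coeff_pos_iff: "3 \<le> m \<Longrightarrow> 0 < cycle_coeff m k \<longleftrightarrow> 2 * k \<le> m"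
  by (cases k) (auto simp: cycle_coeff_0 cycle_coeff_Suc)

lemma binomial_diff_Suc_le_if_cycle_coeff_descent:
  assumes "3 \<le> m" and "cycle_coeff m (Suc k) \<le> cycle_coeff m k"
  shows "(m - Suc k choose Suc k) \<le> (m - k choose k)"
proof -
  have "m * (m - Suc k choose Suc k) = cycle_coeff m (Suc k) * (m - Suc k)"
    using cycle_coeff_mult_eq[OF assms(1)] by simp
  also have "\<dots> \<le> cycle_coeff m k * (m - k)" using assms(2) by (intro mult_mono) auto
  also have "\<dots> = m * (m - k choose k)" using cycle_coeff_mult_eq[OF assms(1)] by simp
  finally show ?thesis using assms(1) by simp
qed

lemma cycle_coeff_Suc_Suc_le:
  assumes "3 \<le> m" and desc: "cycle_coeff m (Suc k) \<le> cycle_coeff m k"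
  shows "cycle_coeff m (Suc (Suc k)) \<le> cycle_coeff m (Suc k)"
proof (cases "2 * Suc (Suc k) \<le> m")
  case True
  then obtain v where "m = 2 * k + 4 + v" by (auto simp: le_iff_add)
  then have m: "m - Suc k = k + v + 3" "m - Suc (Suc k) = k + v + 2" "m - 2 * k = v + 4"
    "m - Suc (2 * k) = v + 3" "m - 2 * Suc k = v + 2" "m - Suc (2 * Suc k) = v + 1"
    by simp_all
  have "0 < cycle_coeff m k" using assms True by (simp add: cycle_coeff_pos_iff)
  moreover have "cycle_coeff m k * ((v + 4) * (v + 3)) = cycle_coeff m (Suc k) * (Suc k * (k + v + 3))"
    using cycle_coeff_Suc_mult_eq[OF assms(1), of k] unfolding m by simp
  moreover have "\<dots> \<le> cycle_coeff m k * (Suc k * (k + v + 3))"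
    using desc by (rule mult_right_mono) simp
  ultimately have "(v + 4) * (v + 3) \<le> Suc k * (k + v + 3)" by (metis mult_le_cancel1)
  moreover have "(v + 2) * (v + 1) \<le> (v + 4) * (v + 3)" by (intro mult_mono) auto
  moreover have "Suc k * (k + v + 3) \<le> Suc (Suc k) * (k + v + 2)" by (simp add: algebra_simps)
  ultimately have ratio_le: "(v + 2) * (v + 1) \<le> Suc (Suc k) * (k + v + 2)" by linarith
  have "cycle_coeff m (Suc (Suc k)) * (Suc (Suc k) * (k + v + 2))
      = cycle_coeff m (Suc k) * ((v + 2) * (v + 1))"
    using cycle_coeff_Suc_mult_eq[OF assms(1), of "Suc k"] unfolding m .
  from le_if_mult_eq_mult[OF this ratio_le] show ?thesis by simp
next
  case False
  then show ?thesis using assms(1) cycle_coeff_pos_iff[of m "Suc (Suc k)"] by simp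
qed

(* With m = 2k + 4 + v: if the ratio c_(k+2) / c_(k+1) exceeds 1, then p_(k+1) / p_k is at
   least 1, because the two ratio conditions differ by the term 5v + 10 - k. *)
lemma quadratic_ratio_step:
  fixes k v :: nat
  assumes less: "Suc (Suc k) * (k + v + 2) < (v + 2) * (v + 1)"
  shows "Suc k * (k + v + 4) \<le> (v + 4) * (v + 3)"
proof (cases "k \<le> 5 * v + 10")
  case True
  have "(v + 4) * (v + 3) + Suc (Suc k) * (k + v + 2) + k
      = (v + 2) * (v + 1) + Suc k * (k + v + 4) + 5 * v + 10"
    by (simp add: algebra_simps)
  then show ?thesis using True less by linarith
next
  case False
  then have "(v + 2) * (v + 1) \<le> Suc (Suc k) * (k + v + 2)" by (intro mult_mono) simp_all
  then show ?thesis using less by linarith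
qed

lemma binomial_diff_le_Suc_if_cycle_coeff_ascent:
  assumes "3 \<le> m" and asc: "cycle_coeff m (Suc k) < cycle_coeff m (Suc (Suc k))"
  shows "(m - k choose k) \<le> (m - Suc k choose Suc k)"
proof -
  have "2 * Suc (Suc k) \<le> m" using assms cycle_coeff_pos_iff[of m "Suc (Suc k)"] by simp
  then obtain v where "m = 2 * k + 4 + v" by (auto simp: le_iff_add)
  then have m: "m - k = k + v + 4" "m - Suc (Suc k) = k + v + 2" "m - 2 * k = v + 4"
    "m - Suc (2 * k) = v + 3" "m - 2 * Suc k = v + 2" "m - Suc (2 * Suc k) = v + 1"
    by simp_all
  have cycle_ratio: "Suc (Suc k) * (k + v + 2) < (v + 2) * (v + 1)"
  proof (rule ccontr)
    assume "\<not> ?thesis"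
    then have ratio_le: "(v + 2) * (v + 1) \<le> Suc (Suc k) * (k + v + 2)" by simp
    have "cycle_coeff m (Suc (Suc k)) * (Suc (Suc k) * (k + v + 2))
        = cycle_coeff m (Suc k) * ((v + 2) * (v + 1))"
      using cycle_coeff_Suc_mult_eq[OF assms(1), of "Suc k"] unfolding m .
    from le_if_mult_eq_mult[OF this ratio_le]
    have "cycle_coeff m (Suc (Suc k)) \<le> cycle_coeff m (Suc k)" by simp
    then show False using asc by simp
  qed
  have "(m - k choose k) * ((v + 4) * (v + 3)) = (m - Suc k choose Suc k) * (Suc k * (k + v + 4))"
    using binomial_diff_Suc_mult_eq[of m k] unfolding m by simp
  from le_if_mult_eq_mult[OF this quadratic_ratio_step[OF cycle_ratio]] show ?thesis by simp
qed

lemma is_mode_unique: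
  assumes "is_mode a i" and "is_mode a j"
  shows "i = j"
proof -
  have "\<not> i < j" if "is_mode a i" "is_mode a j" for i j
  proof
    assume "i < j"
    then have "i \<le> j - 1" by simp
    then have "a (Suc (j - 1)) \<le> a (j - 1)" using that(1) unfolding is_mode_def by blast
    moreover have "a (j - 1) < a j" using that(2) \<open>i < j\<close> unfolding is_mode_def by simp
    ultimately show False using \<open>i < j\<close> by simp
  qed
  then show ?thesis using assms by (meson linorder_neqE_nat)
qed

lemma unimodal_mode_eqI:
  assumes asc: "\<And>k. k < r \<Longrightarrow> a k < a (Suc k)"
    and desc: "\<And>k. r \<le> k \<Longrightarrow> a (Suc k) \<le> a k"
    and "0 < a 0"
  shows "unimodal a" and "mode a = r"
proof -
  show "unimodal a" unfolding unimodal_def using asc desc less_imp_le by blast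
  have "is_mode a r"
    unfolding is_mode_def using asc[of "r - 1"] desc \<open>0 < a 0\<close> by simp
  then show "mode a = r" unfolding mode_def using is_mode_unique by blast
qed

lemma strict_ascent_then_descent:
  fixes a :: "nat \<Rightarrow> nat"
  assumes "a (Suc n) \<le> a n"
    and stays_desc: "\<And>k. a (Suc k) \<le> a k \<Longrightarrow> a (Suc (Suc k)) \<le> a (Suc k)"
  obtains r where "\<And>k. k < r \<Longrightarrow> a k < a (Suc k)" and "\<And>k. r \<le> k \<Longrightarrow> a (Suc k) \<le> a k"
proof
  let ?r = "LEAST k. a (Suc k) \<le> a k"
  show "a k < a (Suc k)" if "k < ?r" for k
    using not_less_Least[OF that] by simp
  show "a (Suc k) \<le> a k" if "?r \<le> k" for k
    using that
  proof (induction k rule: dec_induct)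
    case base
    show ?case using assms(1) by (rule LeastI)
  next
    case (step k)
    then show ?case using stays_desc by blast
  qed
qed

lemma unimodal_mode_shifted_sum:
  fixes c p t :: "nat \<Rightarrow> nat"
  assumes c_pos: "0 < c 0"
    and c_asc: "\<And>k. k < r \<Longrightarrow> c k < c (Suc k)"
    and c_desc: "\<And>k. r \<le> k \<Longrightarrow> c (Suc k) \<le> c k"
    and p_asc: "\<And>k. c (Suc k) < c (Suc (Suc k)) \<Longrightarrow> p k \<le> p (Suc k)"
    and p_desc: "\<And>k. c (Suc k) \<le> c k \<Longrightarrow> p (Suc k) \<le> p k"
    and t_0: "t 0 = c 0"
    and t_Suc: "\<And>k. t (Suc k) = c (Suc k) + c k + p k"
  shows "unimodal t \<and> mode t \<in> {mode c, mode c + 1}"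
proof -
  have mode_c: "mode c = r" using unimodal_mode_eqI(2)[OF c_asc c_desc c_pos] .
  have t_pos: "0 < t 0" using t_0 c_pos by simp
  have t_asc: "t k < t (Suc k)" if "k < r" for k
  proof (cases k)
    case 0
    then show ?thesis using c_asc[of 0] that t_0 t_Suc[of 0] by simp
  next
    case (Suc j)
    then show ?thesis using that c_asc[of j] c_asc[of "Suc j"] p_asc[of j] t_Suc[of j] t_Suc[of "Suc j"]
      by simp
  qed
  have t_desc: "t (Suc k) \<le> t k" if "Suc r \<le> k" for k
  proof -
    obtain j where j: "k = Suc j" "r \<le> j" using \<open>Suc r \<le> k\<close> by (cases k) auto
    then show ?thesis using c_desc[of j] c_desc[of "Suc j"] p_desc[of j] t_Suc[of j] t_Suc[of "Suc j"]
      by simp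
  qed
  show ?thesis
  proof (cases "t r < t (Suc r)")
    case True
    then have "\<And>k. k < Suc r \<Longrightarrow> t k < t (Suc k)" using t_asc by (metis less_antisym)
    from unimodal_mode_eqI[OF this t_desc t_pos] show ?thesis using mode_c by simp
  next
    case False
    then have "\<And>k. r \<le> k \<Longrightarrow> t (Suc k) \<le> t k" using t_desc by (metis not_less le_neq_implies_less Suc_leI)
    from unimodal_mode_eqI[OF t_asc this t_pos] show ?thesis using mode_c by simp
  qed
qed

theorem proposition3p2:
  fixes m :: nat
  assumes "m \<ge> 5"
  shows "unimodal (indep_coeff (tadpole_V m 2) (tadpole_E m 2))
       \<and> mode (indep_coeff (tadpole_V m 2) (tadpole_E m 2))
           \<in> {mode (indep_coeff (cycle_V m) (cycle_E m)),
              mode (indep_coeff (cycle_V m) (cycle_E m)) + 1}"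
proof -
  have m: "3 \<le> m" using assms by simp
  have "cycle_coeff m (Suc m) \<le> cycle_coeff m m"
    using cycle_coeff_pos_iff[OF m, of "Suc m"] by simp
  then obtain r where asc: "\<And>k. k < r \<Longrightarrow> cycle_coeff m k < cycle_coeff m (Suc k)"
    and desc: "\<And>k. r \<le> k \<Longrightarrow> cycle_coeff m (Suc k) \<le> cycle_coeff m k"
    using strict_ascent_then_descent cycle_coeff_Suc_Suc_le[OF m] by metis
  have "indep_coeff (tadpole_V m 2) (tadpole_E m 2) 0 = cycle_coeff m 0"
    using m card_tadpole_edges[of m 2]
    by (simp add: indep_coeff_0 cycle_coeff_0 tadpole_V_def)
  then show ?thesis
    using cycle_coeff_0 m
    by (intro unimodal_mode_shifted_sum[where p = "\<lambda>k. m - k choose k", OF _ asc desc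
          binomial_diff_le_Suc_if_cycle_coeff_ascent[OF m]
          binomial_diff_Suc_le_if_cycle_coeff_descent[OF m] _ indep_coeff_tadpole_Suc[OF m]])
      simp_all
qed

end
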